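(* Let $(m_j)_{j=1}^{\infty}$ be a strictly increasing sequence of positive integers with $m_{j+1}\ge q\,m_j$ for all $j$, where $q\ge 3$. Let $A_j>0$, $B_j\in\mathbb{C}$ satisfy $A_j^2-|B_j|^2=1$ for all $j$. Suppose that the limit $$\lim_{N\to\infty}\prod_{j=1}^{N}\begin{bmatrix} A_j & B_j e^{2\pi i m_j t}\\ \overline{B_j}e^{-2\pi i m_j t} & A_j\end{bmatrix}$$ (factors multiplied in increasing order of $j$ from left to right) exists in $\mathrm{SU}(1,1)$ for every $t$ in a set of positive Lebesgue measure in $\mathbb{T}$. Then $\sum_{j=1}^{\infty}\log(A_j^2+|B_j|^2)<\infty$.
   Context: $\mathbb{T}=\mathbb{R}/\mathbb{Z}$. $\mathrm{SU}(1,1)=\{\begin{bmatrix} A & B\\ \overline{B} & \overline{A}\end{bmatrix}: A,B\in\mathbb{C},\ |A|^2-|B|^2=1\}$, with convergence understood with respect to the complete metric $\rho(G_1,G_2)=\log(1+\|G_1^{-1}G_2-I_2\|_{op})$ (equivalently entrywise). The conclusion is equivalent to $\sum_j |B_j|^2<\infty$. *)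

theory Defs
  imports "HOL-Analysis.Analysis"
begin

definition mat2 :: "complex \<Rightarrow> complex \<Rightarrow> complex \<Rightarrow> complex \<Rightarrow> complex^2^2" where
  "mat2 a b c d = (\<chi> i j. if i = 1 then (if j = 1 then a else b) else (if j = 1 then c else d))"

definition SU11 :: "(complex^2^2) set" where
  "SU11 = {M. \<exists>A B. M = mat2 A B (cnj B) (cnj A) \<and> (cmod A)\<^sup>2 - (cmod B)\<^sup>2 = 1}"

primrec prodL :: "(nat \<Rightarrow> complex^2^2) \<Rightarrow> nat \<Rightarrow> complex^2^2" where
  "prodL F 0 = mat 1"
| "prodL F (Suc N) = prodL F N ** F N"

definition factor :: "(nat \<Rightarrow> nat) \<Rightarrow> (nat \<Rightarrow> real) \<Rightarrow> (nat \<Rightarrow> complex) \<Rightarrow> real \<Rightarrow> nat \<Rightarrow> complex^2^2" where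
  "factor m A B t j = mat2 (complex_of_real (A j))
      (B j * cis (2 * pi * real (m j) * t))
      (cnj (B j) * cis (- 2 * pi * real (m j) * t))
      (complex_of_real (A j))"

end

theory Submission
  imports Defs "HOL-Complex_Analysis.Complex_Analysis"
begin

text \<open>For \<open>w = circ t\<close> the product of the factors \<open>M, ..., M + n - 1\<close> is an SU(1,1) matrix whose
  lower right entry \<open>X(w)\<close> is a polynomial in \<open>w\<close> without zeros in the closed disc, so \<open>ln |X|\<close> is
  harmonic there. Lacunarity makes the correction terms in the recursion for \<open>X\<close> of high degree;
  hence \<open>|X(w)|\<close> is at least half of \<open>A_M \<cdots> A_(M+n-1)\<close> on a disc of radius \<open>r < 1\<close> once \<open>M\<close> is
  large, and the mean of \<open>|X|\<^sup>2\<close> over the circle is at most \<open>P = \<Prod>(A_j\<^sup>2 + |B_j|\<^sup>2)\<close>.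
  Convergence on \<open>E\<close> bounds all tails by some \<open>K\<close> on a set \<open>G\<close> of positive measure. Choose an
  interval \<open>[c - h, c + h]\<close> in which \<open>G\<close> has density at least \<open>63/64\<close> and put \<open>w = (1 - h/2) circ c\<close>.
  In the Poisson integral for \<open>ln |X(w)|\<close> the boundary values are at most \<open>ln K\<close> on \<open>G\<close>, while the
  complement of \<open>G\<close> carries Poisson mass at most \<open>1/4\<close> and there \<open>ln |X| \<le> |X|\<^sup>2 / (2 P) + ln P / 2\<close>.
  As \<open>ln (A\<^sup>2 + |B|\<^sup>2) \<le> 4 ln A\<close>, this bounds the partial sums of \<open>ln A_j\<close> over the tail.\<close>

section \<open>The Poisson kernel of the unit disc\<close>

definition circ :: "real \<Rightarrow> complex" where
  "circ t = cis (2 * pi * t)"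

definition poisson_kernel :: "complex \<Rightarrow> real \<Rightarrow> real" where
  "poisson_kernel w t = (1 - (cmod w)\<^sup>2) / (cmod (circ t - w))\<^sup>2"

lemma norm_circ [simp]: "cmod (circ t) = 1"
  by (simp add: circ_def)

lemma circ_nonzero [simp]: "circ t \<noteq> 0"
  by (simp add: circ_def)

lemma cnj_circ: "cnj (circ t) = inverse (circ t)"
  by (simp add: circ_def cis_cnj cis_inverse)

lemma circ_power: "circ t ^ n = cis (2 * pi * real n * t)"
  unfolding circ_def Complex.DeMoivre by (simp add: algebra_simps)

lemma continuous_on_circ [continuous_intros]: "continuous_on S circ"
  unfolding circ_def by (intro continuous_intros)

lemma circ_ne_disc_point: "cmod w < 1 \<Longrightarrow> circ t \<noteq> w"
  using norm_circ[of t] by auto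

lemma Cauchy_integral_unit_circle:
  assumes "continuous_on (cball 0 1) f" "f holomorphic_on ball 0 1" "cmod w < 1"
  shows "((\<lambda>t. f (circ t) / (circ t - w) * circ t) has_integral f w) {0..1}"
proof -
  have "((\<lambda>u. f u / (u - w)) has_contour_integral (2 * of_real pi * \<i> * f w)) (circlepath 0 1)"
    using Cauchy_integral_circlepath[OF assms(1,2)] assms(3) by simp
  then have "((\<lambda>t. f (circ t) / (circ t - w) * (2 * pi * \<i> * circ t))
      has_integral (2 * of_real pi * \<i> * f w)) {0..1}"
    unfolding has_contour_integral_def
  proof (rule has_integral_eq[rotated])
    fix t :: real assume "t \<in> {0..1}"
    then have "vector_derivative (circlepath 0 1) (at t within {0..1}) = 2 * pi * \<i> * circ t"
      by (simp add: vector_derivative_circlepath01 circ_def cis_conv_exp mult.commute mult.left_commute)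
    moreover have "circlepath 0 1 t = circ t"
      by (simp add: circlepath circ_def cis_conv_exp mult.commute mult.left_commute)
    ultimately show "f (circlepath 0 1 t) / (circlepath 0 1 t - w) *
        vector_derivative (circlepath 0 1) (at t within {0..1})
      = f (circ t) / (circ t - w) * (2 * pi * \<i> * circ t)" by simp
  qed
  from has_integral_mult_right[OF this, of "1 / (2 * pi * \<i>)"] show ?thesis
    by (simp add: field_simps)
qed

lemma one_minus_cnj_mult_nonzero:
  assumes "cmod w < 1" "cmod u \<le> 1"
  shows "1 - cnj w * u \<noteq> 0"
proof
  assume "1 - cnj w * u = 0"
  then have "cmod (cnj w * u) = 1" by (metis eq_iff_diff_eq_0 norm_one)
  moreover have "cmod (cnj w * u) < 1"
    using assms mult_left_le[of "cmod u" "cmod w"] by (simp add: norm_mult)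
  ultimately show False by simp
qed

text \<open>The Poisson kernel is the Cauchy kernel at \<open>w\<close> plus the (conjugated) Cauchy kernel at the
  reflected point \<open>1 / cnj w\<close>, which contributes nothing to the integral of a holomorphic function.\<close>

lemma poisson_kernel_eq:
  assumes "cmod w < 1"
  shows "circ t / (circ t - w) + cnj w * circ t / (1 - cnj w * circ t) = of_real (poisson_kernel w t)"
proof -
  let ?e = "circ t"
  have e1: "?e * cnj ?e = 1"
    using norm_circ[of t] by (simp add: complex_norm_square[symmetric])
  have n1: "?e - w \<noteq> 0" using circ_ne_disc_point[OF assms] by simp
  have n2: "1 - cnj w * ?e \<noteq> 0" using one_minus_cnj_mult_nonzero[OF assms] by simp
  have f: "1 - cnj w * ?e = ?e * cnj (?e - w)" using e1 by (simp add: algebra_simps)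
  have "?e / (?e - w) + cnj w * ?e / (1 - cnj w * ?e)
      = ?e * (1 - w * cnj w) / ((?e - w) * (1 - cnj w * ?e))"
    using n1 n2 by (simp add: field_simps)
  also have "\<dots> = ?e * (1 - w * cnj w) / ((?e - w) * (?e * cnj (?e - w)))"
    by (simp only: f)
  also have "\<dots> = (1 - w * cnj w) / ((?e - w) * cnj (?e - w))"
    by (metis circ_nonzero mult.left_commute mult_divide_mult_cancel_left)
  also have "\<dots> = of_real (poisson_kernel w t)"
    by (simp only: poisson_kernel_def of_real_divide of_real_diff of_real_1 complex_norm_square)
  finally show ?thesis .
qed

theorem Poisson_integral_formula:
  assumes "continuous_on (cball 0 1) f" "f holomorphic_on ball 0 1" "cmod w < 1"
  shows "((\<lambda>t. of_real (poisson_kernel w t) * f (circ t)) has_integral f w) {0..1}"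
proof -
  define g where "g u = f u * (cnj w * u / (1 - cnj w * u))" for u
  have nz: "\<And>u. u \<in> cball 0 1 \<Longrightarrow> 1 - cnj w * u \<noteq> 0"
    using one_minus_cnj_mult_nonzero[OF assms(3)] by simp
  have "continuous_on (cball 0 1) g"
    unfolding g_def by (intro continuous_intros assms(1)) (use nz in auto)
  moreover have "g holomorphic_on ball 0 1"
    unfolding g_def by (intro holomorphic_intros assms(2)) (use nz in auto)
  ultimately have "((\<lambda>t. g (circ t) / (circ t - 0) * circ t) has_integral g 0) {0..1}"
    by (rule Cauchy_integral_unit_circle) simp
  from has_integral_add[OF Cauchy_integral_unit_circle[OF assms] this]
  have "((\<lambda>t. f (circ t) / (circ t - w) * circ t + g (circ t) / (circ t - 0) * circ t)
      has_integral f w) {0..1}"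
    by (simp add: g_def)
  then show ?thesis
  proof (rule has_integral_eq[rotated])
    fix t
    have "f (circ t) / (circ t - w) * circ t + g (circ t) / (circ t - 0) * circ t
        = f (circ t) * (circ t / (circ t - w) + cnj w * circ t / (1 - cnj w * circ t))"
      by (simp add: g_def distrib_left)
    then show "f (circ t) / (circ t - w) * circ t + g (circ t) / (circ t - 0) * circ t
        = of_real (poisson_kernel w t) * f (circ t)"
      by (simp add: poisson_kernel_eq[OF assms(3)])
  qed
qed

lemma mean_value_unit_circle:
  assumes "continuous_on (cball 0 1) f" "f holomorphic_on ball 0 1"
  shows "((\<lambda>t. f (circ t)) has_integral f 0) {0..1}"
  using Poisson_integral_formula[OF assms, of 0] by (simp add: poisson_kernel_def)

lemma poisson_kernel_nonneg: "cmod w < 1 \<Longrightarrow> 0 \<le> poisson_kernel w t"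
  unfolding poisson_kernel_def by (simp add: abs_square_le_1 power_le_one)

lemma poisson_kernel_le:
  assumes "cmod w < 1"
  shows "poisson_kernel w t \<le> (1 + cmod w) / (1 - cmod w)"
proof -
  let ?r = "cmod w"
  have "1 - ?r \<le> cmod (circ t - w)"
    using norm_triangle_ineq2[of "circ t" w] by simp
  then have d: "(1 - ?r)\<^sup>2 \<le> (cmod (circ t - w))\<^sup>2"
    using assms by (intro power_mono) auto
  have "0 \<le> 1 - ?r\<^sup>2" using assms by (simp add: abs_square_le_1 power_le_one)
  moreover have "0 < (1 - ?r)\<^sup>2" using assms by simp
  moreover have "0 < (cmod (circ t - w))\<^sup>2" using circ_ne_disc_point[OF assms] by simp
  ultimately have "poisson_kernel w t \<le> (1 - ?r\<^sup>2) / (1 - ?r)\<^sup>2"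
    unfolding poisson_kernel_def using d by (intro divide_left_mono mult_pos_pos)
  also have "\<dots> = ((1 - ?r) * (1 + ?r)) / ((1 - ?r) * (1 - ?r))"
    by (simp add: power2_eq_square algebra_simps)
  also have "\<dots> = (1 + ?r) / (1 - ?r)"
    using assms by simp
  finally show ?thesis .
qed

lemma continuous_on_poisson_kernel: "cmod w < 1 \<Longrightarrow> continuous_on S (poisson_kernel w)"
  unfolding poisson_kernel_def[abs_def] using circ_ne_disc_point
  by (intro continuous_intros) auto

lemma has_integral_poisson_kernel: "cmod w < 1 \<Longrightarrow> (poisson_kernel w has_integral 1) {0..1}"
  using has_integral_linear[OF Poisson_integral_formula[of "\<lambda>_. 1" w] bounded_linear_Re]
  by (simp add: o_def)

lemma poisson_kernel_indicator_integrable: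
  assumes "cmod w < 1" "S \<in> sets lebesgue"
  shows "(\<lambda>t. poisson_kernel w t * indicator S t) integrable_on {0..1}"
proof -
  have "indicator S \<in> borel_measurable (lebesgue_on {0..1::real})"
    by (rule measurable_restrict_space1) (use assms(2) in auto)
  moreover have "bounded (indicator S ` {0..1::real} :: real set)"
    by (rule boundedI[of _ 1]) (auto simp: indicator_def)
  ultimately have "(\<lambda>t. indicator S t * poisson_kernel w t) absolutely_integrable_on {0..1}"
    by (intro absolutely_integrable_bounded_measurable_product_real absolutely_integrable_continuous_real
        continuous_on_poisson_kernel assms(1)) auto
  then show ?thesis by (simp add: absolutely_integrable_on_def mult.commute)
qed

lemma Poisson_integral_ln_norm:
  assumes F: "continuous_on (cball 0 1) F" "F holomorphic_on ball 0 1"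
    and f: "\<And>u. cmod u \<le> 1 \<Longrightarrow> f u = of_real c * exp (F u)" and "0 < c" and w: "cmod w < 1"
  shows "((\<lambda>t. poisson_kernel w t * ln (cmod (f (circ t)))) has_integral ln (cmod (f w))) {0..1}"
proof -
  have ln_f: "ln (cmod (f u)) = ln c + Re (F u)" if "cmod u \<le> 1" for u
    using f[OF that] \<open>0 < c\<close> by (simp add: norm_mult ln_mult)
  have "((\<lambda>t. poisson_kernel w t * Re (F (circ t))) has_integral Re (F w)) {0..1}"
    using has_integral_linear[OF Poisson_integral_formula[OF F w] bounded_linear_Re]
    by (simp add: o_def)
  from has_integral_add[OF has_integral_mult_left[OF has_integral_poisson_kernel[OF w], of "ln c"] this]
  show ?thesis
    using w by (simp add: ln_f distrib_left mult.commute)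
qed

lemma ln_le_bound_or_square_div:
  fixes y K P c :: real
  assumes "0 < y" "1 \<le> K" "1 \<le> P" "0 \<le> c" "y \<le> K \<or> c = 1"
  shows "ln y \<le> ln K + y\<^sup>2 / (2 * P) + ln P / 2 * c"
proof (cases "y \<le> K")
  case True
  then have "ln y \<le> ln K" using assms by simp
  moreover have "0 \<le> ln P / 2 * c" "0 \<le> y\<^sup>2 / (2 * P)" using assms by simp_all
  ultimately show ?thesis by linarith
next
  case False
  have "ln (y\<^sup>2 / P) \<le> y\<^sup>2 / P - 1" by (rule ln_le_minus_one) (use assms in simp)
  then have "ln y \<le> y\<^sup>2 / (2 * P) + ln P / 2" using assms by (simp add: ln_div ln_realpow field_simps)
  moreover have "0 \<le> ln K" "c = 1" using assms False by simp_all
  ultimately show ?thesis by simp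
qed

lemma norm_circ_diff_sq:
  "(cmod (circ t - of_real r * circ c))\<^sup>2 = (1 - r)\<^sup>2 + 4 * r * (sin (pi * (t - c)))\<^sup>2"
proof -
  have expand: "(x - r * u)\<^sup>2 + (y - r * v)\<^sup>2 = (x\<^sup>2 + y\<^sup>2) + r\<^sup>2 * (u\<^sup>2 + v\<^sup>2) - 2 * r * (x * u + y * v)"
    for x y u v :: real
    by (simp add: power2_eq_square algebra_simps)
  have "(cmod (circ t - of_real r * circ c))\<^sup>2
      = (cos (2*pi*t) - r * cos (2*pi*c))\<^sup>2 + (sin (2*pi*t) - r * sin (2*pi*c))\<^sup>2"
    unfolding cmod_power2 circ_def by simp
  also have "\<dots> = 1 + r\<^sup>2 - 2 * r * cos (2 * (pi * (t - c)))"
    unfolding expand by (simp add: cos_diff[symmetric] right_diff_distrib mult.assoc)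
  also have "\<dots> = (1 - r)\<^sup>2 + 4 * r * (sin (pi * (t - c)))\<^sup>2"
    by (subst cos_double_sin) (simp add: power2_eq_square algebra_simps)
  finally show ?thesis .
qed

lemma poisson_kernel_le_inverse_sin2:
  assumes "0 < r" "r < 1" "sin (pi * (t - c)) \<noteq> 0"
  shows "poisson_kernel (of_real r * circ c) t \<le> (1 - r\<^sup>2) / (4 * r * (sin (pi * (t - c)))\<^sup>2)"
proof -
  have r: "cmod (of_real r * circ c) = r" using assms by (simp add: norm_mult)
  have "0 < 4 * r * (sin (pi * (t - c)))\<^sup>2" using assms by simp
  moreover have "0 \<le> 1 - r\<^sup>2" using assms by (simp add: power_le_one)
  ultimately show ?thesis
    unfolding poisson_kernel_def norm_circ_diff_sq r
    by (intro divide_left_mono mult_pos_pos add_nonneg_pos) (use assms in auto)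
qed

lemma cot_le_inverse:
  assumes "0 < x" "x < pi"
  shows "cot x \<le> 1 / x"
proof -
  have "sin 0 - 0 * cos 0 \<le> sin x - x * cos x"
  proof (rule DERIV_nonneg_imp_nondecreasing[of 0 x "\<lambda>x. sin x - x * cos x"])
    fix y assume "0 \<le> y" "y \<le> x"
    with assms show "\<exists>d. ((\<lambda>x. sin x - x * cos x) has_real_derivative d) (at y) \<and> 0 \<le> d"
      by (intro exI[of _ "y * sin y"])
        (auto intro!: derivative_eq_intros mult_nonneg_nonneg sin_ge_zero simp: algebra_simps)
  qed (use assms in auto)
  moreover have "sin x > 0" using assms by (simp add: sin_gt_zero)
  ultimately show ?thesis using assms by (simp add: cot_def field_simps)
qed

lemma has_integral_inverse_sin2:
  assumes "a \<le> b" "\<And>t. t \<in> {a..b} \<Longrightarrow> sin (pi * (t - c)) \<noteq> 0"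
  shows "((\<lambda>t. 1 / (sin (pi * (t - c)))\<^sup>2) has_integral
           (cot (pi * (a - c)) - cot (pi * (b - c))) / pi) {a..b}"
proof -
  have "((\<lambda>t. 1 / (sin (pi * (t - c)))\<^sup>2) has_integral
           (- cot (pi * (b - c)) / pi) - (- cot (pi * (a - c)) / pi)) {a..b}"
  proof (rule fundamental_theorem_of_calculus[OF assms(1)])
    fix t assume "t \<in> {a..b}"
    then have "sin (pi * (t - c)) \<noteq> 0" by (rule assms(2))
    then have "((\<lambda>t. - cot (pi * (t - c)) / pi) has_real_derivative 1 / (sin (pi * (t - c)))\<^sup>2) (at t)"
      by (auto intro!: derivative_eq_intros DERIV_cot[THEN DERIV_chain2] simp: field_simps power2_eq_square)
    then show "((\<lambda>t. - cot (pi * (t - c)) / pi) has_vector_derivative 1 / (sin (pi * (t - c)))\<^sup>2)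
        (at t within {a..b})"
      by (simp add: has_real_derivative_iff_has_vector_derivative has_vector_derivative_at_within)
  qed
  then show ?thesis by (simp add: diff_divide_distrib)
qed

lemma integral_poisson_kernel_le_cot:
  assumes "a \<le> b" "\<And>t. t \<in> {a..b} \<Longrightarrow> sin (pi * (t - c)) \<noteq> 0" "0 < r" "r < 1"
  shows "integral {a..b} (poisson_kernel (of_real r * circ c))
           \<le> (1 - r\<^sup>2) / (4 * r) * ((cot (pi * (a - c)) - cot (pi * (b - c))) / pi)"
proof (rule has_integral_le)
  have "cmod (of_real r * circ c) < 1" using assms by (simp add: norm_mult)
  then show "(poisson_kernel (of_real r * circ c) has_integral
      integral {a..b} (poisson_kernel (of_real r * circ c))) {a..b}"
    using continuous_on_poisson_kernel integrable_continuous_interval integrable_integral by blast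
  show "((\<lambda>t. (1 - r\<^sup>2) / (4 * r) * (1 / (sin (pi * (t - c)))\<^sup>2)) has_integral
      (1 - r\<^sup>2) / (4 * r) * ((cot (pi * (a - c)) - cot (pi * (b - c))) / pi)) {a..b}"
    by (rule has_integral_mult_right[OF has_integral_inverse_sin2[OF assms(1,2)]])
  show "poisson_kernel (of_real r * circ c) t \<le> (1 - r\<^sup>2) / (4 * r) * (1 / (sin (pi * (t - c)))\<^sup>2)"
    if "t \<in> {a..b}" for t
    using poisson_kernel_le_inverse_sin2[OF assms(3,4) assms(2)[OF that]] by simp
qed

lemma integral_indicator_outside_interval:
  fixes f :: "real \<Rightarrow> real"
  assumes "continuous_on {0..1} f" "0 \<le> a" "a \<le> b" "b \<le> 1"
  shows "integral {0..1} (\<lambda>t. f t * indicator ({0..1} - {a..b}) t) = integral {0..a} f + integral {b..1} f"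
proof -
  let ?g = "\<lambda>t. f t * indicator ({0..1} - {a..b}) t"
  have f_int: "(f has_integral integral {u..v} f) {u..v}" if "0 \<le> u" "v \<le> 1" for u v
  proof (rule integrable_integral, rule integrable_continuous_interval)
    show "continuous_on {u..v} f" by (rule continuous_on_subset[OF assms(1)]) (use that in auto)
  qed
  have "(?g has_integral integral {0..a} f) {0..a}"
    by (rule has_integral_spike[OF negligible_sing[of a] _ f_int]) (use assms in \<open>auto simp: indicator_def\<close>)
  moreover have "(?g has_integral 0) {a..b}"
    by (rule has_integral_is_0) auto
  moreover have "(?g has_integral integral {b..1} f) {b..1}"
    by (rule has_integral_spike[OF negligible_sing[of b] _ f_int]) (use assms in \<open>auto simp: indicator_def\<close>)
  ultimately have "(?g has_integral integral {0..a} f + 0 + integral {b..1} f) {0..1}"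
    using assms by (meson has_integral_combine order.trans)
  then show ?thesis by (simp add: integral_unique)
qed

lemma integral_poisson_kernel_outside_le:
  assumes h: "0 < h" "0 \<le> c - h" "c + h \<le> 1" and r: "0 < r" "r < 1"
  shows "integral {0..1} (\<lambda>t. poisson_kernel (of_real r * circ c) t * indicator ({0..1} - {c-h..c+h}) t)
     \<le> (1 - r\<^sup>2) / (4 * r) * (2 / (pi\<^sup>2 * h))"
proof -
  let ?P = "poisson_kernel (of_real r * circ c)" and ?k = "(1 - r\<^sup>2) / (4 * r)"
  have "cmod (of_real r * circ c) < 1" using r by (simp add: norm_mult)
  then have "integral {0..1} (\<lambda>t. ?P t * indicator ({0..1} - {c-h..c+h}) t)
      = integral {0..c-h} ?P + integral {c+h..1} ?P"
    using h by (intro integral_indicator_outside_interval continuous_on_poisson_kernel) auto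
  also have "\<dots> \<le> ?k * ((cot (pi * (0 - c)) - cot (pi * (c - h - c))) / pi)
                + ?k * ((cot (pi * (c + h - c)) - cot (pi * (1 - c))) / pi)"
  proof (intro add_mono integral_poisson_kernel_le_cot r)
    show "sin (pi * (t - c)) \<noteq> 0" if "t \<in> {0..c-h}" for t
    proof -
      have "0 < sin (pi * (c - t))" using that h by (intro sin_gt_zero) auto
      then show ?thesis by (metis minus_diff_eq mult_minus_right sin_minus neg_0_less_iff_less less_irrefl)
    qed
    show "sin (pi * (t - c)) \<noteq> 0" if "t \<in> {c+h..1}" for t
      using that h sin_gt_zero[of "pi * (t - c)"] by auto
  qed (use h in auto)
  also have "\<dots> = ?k * (2 * cot (pi * h) / pi)"
  proof -
    have "cot (pi * (0 - c)) = - cot (pi * c)" "cot (pi * (c - h - c)) = - cot (pi * h)"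
      "cot (pi * (1 - c)) = - cot (pi * c)" "c + h - c = h"
      by (simp_all add: cot_def right_diff_distrib sin_diff cos_diff)
    moreover have "x * ((- a - - b) / pi) + x * ((b - - a) / pi) = x * (2 * b / pi)" for x a b :: real
      by (simp add: field_simps)
    ultimately show ?thesis by (simp only:)
  qed
  also have "\<dots> \<le> ?k * (2 * (1 / (pi * h)) / pi)"
    using h r cot_le_inverse[of "pi * h"]
    by (intro mult_left_mono divide_right_mono) (auto simp: power_le_one)
  also have "\<dots> = ?k * (2 / (pi\<^sup>2 * h))" by (simp add: power2_eq_square)
  finally show ?thesis .
qed

lemma norm_near_circle: "h \<le> 2 \<Longrightarrow> cmod (of_real (1 - h/2) * circ c) = 1 - h/2"
  by (simp only: norm_mult norm_circ norm_of_real) simp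

lemma poisson_kernel_le_near_circle:
  assumes "0 < h" "h \<le> 1"
  shows "poisson_kernel (of_real (1 - h/2) * circ c) t \<le> 4 / h"
proof -
  have "cmod (of_real (1 - h/2) * circ c) = 1 - h/2" using assms by (intro norm_near_circle) simp
  then have "poisson_kernel (of_real (1 - h/2) * circ c) t \<le> (1 + (1 - h/2)) / (1 - (1 - h/2))"
    using poisson_kernel_le[of "of_real (1 - h/2) * circ c" t] assms by simp
  also have "\<dots> \<le> 4 / h" using assms by (simp add: field_simps)
  finally show ?thesis .
qed

lemma integral_poisson_kernel_outside_le_eighth:
  assumes h: "0 < h" "0 \<le> c - h" "c + h \<le> 1"
  shows "integral {0..1} (\<lambda>t. poisson_kernel (of_real (1 - h/2) * circ c) t * indicator ({0..1} - {c-h..c+h}) t)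
     \<le> 1/8"
proof -
  define r where "r = 1 - h/2"
  have r: "0 < r" "r < 1" "3/4 \<le> r" using h by (auto simp: r_def)
  have "(1 - r\<^sup>2) / (4 * r) \<le> h / 3"
    using r h by (simp add: r_def field_simps power2_eq_square)
  then have "(1 - r\<^sup>2) / (4 * r) * (2 / (pi\<^sup>2 * h)) \<le> h / 3 * (2 / (pi\<^sup>2 * h))"
    using h by (intro mult_right_mono) auto
  also have "\<dots> = 2 / (3 * pi\<^sup>2)" using h by (simp add: field_simps)
  also have "\<dots> \<le> 1/8"
    using power_mono[of 3 pi 2] pi_gt3 by (simp add: field_simps)
  finally have "(1 - r\<^sup>2) / (4 * r) * (2 / (pi\<^sup>2 * h)) \<le> 1/8" .
  from order_trans[OF integral_poisson_kernel_outside_le[OF h r(1,2)] this]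
  show ?thesis by (simp add: r_def)
qed

lemma integral_poisson_kernel_indicator_le:
  assumes w: "cmod w < 1" and S: "S \<in> lmeasurable" "S \<subseteq> {0..1}" and p: "\<And>t. poisson_kernel w t \<le> p"
  shows "integral {0..1} (\<lambda>t. poisson_kernel w t * indicator S t) \<le> p * measure lebesgue S"
proof -
  have "S \<inter> {0..1} = S" using S by auto
  then have ind_int: "(indicator S :: real \<Rightarrow> real) integrable_on {0..1}"
    unfolding integrable_on_indicator using S by simp
  have "integral {0..1} (\<lambda>t. poisson_kernel w t * indicator S t) \<le> integral {0..1} (\<lambda>t. p * indicator S t)"
  proof (rule integral_le[OF poisson_kernel_indicator_integrable[OF w] integrable_on_mult_right[OF ind_int]])
    show "S \<in> sets lebesgue" using S by (simp add: fmeasurable_def)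
    show "poisson_kernel w t * indicator S t \<le> p * indicator S t" for t
      using p[of t] by (simp add: indicator_def)
  qed
  also have "\<dots> = p * measure lebesgue S"
    using integral_indicator[of S "{0..1}"] S \<open>S \<inter> {0..1} = S\<close> by simp
  finally show ?thesis .
qed

text \<open>At most \<open>1/8\<close> of the mass comes from outside \<open>[c - h, c + h]\<close> and at most \<open>1/8\<close> from inside,
  where the kernel is bounded by \<open>4/h\<close>.\<close>

lemma integral_poisson_kernel_sparse_le:
  assumes S: "S \<in> sets lebesgue" and h: "0 < h" "0 \<le> c - h" "c + h \<le> 1"
    and meas: "measure lebesgue ({c-h..c+h} \<inter> S) \<le> h / 32"
  shows "integral {0..1} (\<lambda>t. poisson_kernel (of_real (1 - h/2) * circ c) t * indicator ({0..1} \<inter> S) t) \<le> 1/4"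
proof -
  define w where "w = of_real (1 - h/2) * circ c"
  define I where "I = {c-h..c+h}"
  have w: "cmod w < 1" using h norm_near_circle[of h c] by (simp add: w_def)
  have IS: "I \<inter> S \<in> lmeasurable"
    by (rule bounded_set_imp_lmeasurable) (auto simp: I_def S intro: bounded_subset[OF bounded_closed_interval])
  have "integral {0..1} (\<lambda>t. poisson_kernel w t * indicator (I \<inter> S) t) \<le> 4 / h * measure lebesgue (I \<inter> S)"
  proof (rule integral_poisson_kernel_indicator_le[OF w IS])
    show "I \<inter> S \<subseteq> {0..1}" using h by (auto simp: I_def)
    show "poisson_kernel w t \<le> 4 / h" for t
      unfolding w_def using h by (intro poisson_kernel_le_near_circle) auto
  qed
  also have "\<dots> \<le> 1/8" using meas h by (simp add: I_def field_simps)
  finally have inside: "integral {0..1} (\<lambda>t. poisson_kernel w t * indicator (I \<inter> S) t) \<le> 1/8" .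
  have int_out: "(\<lambda>t. poisson_kernel w t * indicator ({0..1} - I) t) integrable_on {0..1}"
    and int_in: "(\<lambda>t. poisson_kernel w t * indicator (I \<inter> S) t) integrable_on {0..1}"
    and int_S: "(\<lambda>t. poisson_kernel w t * indicator ({0..1} \<inter> S) t) integrable_on {0..1}"
    using S by (intro poisson_kernel_indicator_integrable w sets.Int sets.Diff; simp add: I_def)+
  have "integral {0..1} (\<lambda>t. poisson_kernel w t * indicator ({0..1} \<inter> S) t)
      \<le> integral {0..1} (\<lambda>t. poisson_kernel w t * indicator ({0..1} - I) t
                              + poisson_kernel w t * indicator (I \<inter> S) t)"
  proof (rule integral_le[OF int_S integrable_add[OF int_out int_in]])
    show "poisson_kernel w t * indicator ({0..1} \<inter> S) t
        \<le> poisson_kernel w t * indicator ({0..1} - I) t + poisson_kernel w t * indicator (I \<inter> S) t" for t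
      using poisson_kernel_nonneg[OF w, of t] by (simp add: indicator_def)
  qed
  also have "\<dots> \<le> 1/4"
    using integral_poisson_kernel_outside_le_eighth[OF h] inside integral_add[OF int_out int_in]
    by (simp add: w_def I_def)
  finally show ?thesis by (simp add: w_def)
qed

section \<open>Intervals of high density\<close>

lemma emeasure_pos_in_countable_cover:
  fixes G :: "nat \<Rightarrow> 'a set"
  assumes "E \<subseteq> (\<Union>k. G k)" "\<And>k. G k \<in> sets M" "E \<in> sets M" "0 < emeasure M E"
  obtains k where "0 < emeasure M (G k)"
proof (rule ccontr)
  assume "\<not> thesis"
  then have "emeasure M (G k) = 0" for k
    using that[of k] not_gr_zero by blast
  then have "G k \<in> null_sets M" for k
    unfolding null_sets_def using assms(2) by blast
  then have "E \<in> null_sets M"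
    using assms(1,3) null_sets_UN[of G] by (blast intro: null_sets_subset)
  then show False using assms(4) by (simp add: null_sets_def)
qed

lemma disjoint_cballs_cover_open_subset:
  fixes S :: "'a::euclidean_space set"
  assumes "open T" "S \<subseteq> T"
  obtains C where "countable C" "\<And>i. i \<in> C \<Longrightarrow> 0 < snd i \<and> cball (fst i) (snd i) \<subseteq> T"
    "disjoint_family_on (\<lambda>i. cball (fst i) (snd i)) C"
    "negligible (S - (\<Union>i\<in>C. cball (fst i) (snd i)))"
proof -
  define K where "K = {(x, d). x \<in> S \<and> 0 < d \<and> cball x d \<subseteq> T}"
  have "\<exists>i. i \<in> K \<and> x \<in> cball (fst i) (snd i) \<and> snd i < d" if "x \<in> S" "0 < d" for x d
  proof -
    have "x \<in> T" using assms(2) that(1) by blast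
    then obtain e where e: "0 < e" "ball x e \<subseteq> T"
      using open_contains_ball_eq[OF assms(1)] by blast
    define d' where "d' = min (d/2) (e/2)"
    have "cball x d' \<subseteq> ball x e" using e by (auto simp: d'_def)
    then have "(x, d') \<in> K" using e that by (auto simp: K_def d'_def)
    then show ?thesis using that e by (intro exI[of _ "(x, d')"]) (auto simp: d'_def)
  qed
  note cover = this
  have "\<And>i. i \<in> K \<Longrightarrow> 0 < snd i" by (auto simp: K_def)
  then obtain C where C: "countable C" "C \<subseteq> K"
     "pairwise (\<lambda>i j. disjnt (cball (fst i) (snd i)) (cball (fst j) (snd j))) C"
     "negligible (S - (\<Union>i\<in>C. cball (fst i) (snd i)))"
    by (rule Vitali_covering_theorem_cballs[of K snd S fst, OF _ cover])
  show ?thesis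
  proof (rule that[OF C(1) _ _ C(4)])
    show "0 < snd i \<and> cball (fst i) (snd i) \<subseteq> T" if "i \<in> C" for i
      using subsetD[OF C(2) that] by (cases i) (simp add: K_def)
    show "disjoint_family_on (\<lambda>i. cball (fst i) (snd i)) C"
      using C(3) unfolding disjoint_family_on_def pairwise_def disjnt_def by blast
  qed
qed

lemma emeasure_le_disjoint_cover_Diff:
  fixes Bl :: "'i \<Rightarrow> 'a::euclidean_space set"
  assumes C: "countable C" "disjoint_family_on Bl C" "negligible (S - (\<Union>i\<in>C. Bl i))"
    and sets: "\<And>i. Bl i \<in> sets lebesgue" "S \<in> sets lebesgue" "G \<in> sets lebesgue"
    and sparse: "\<And>i. i \<in> C \<Longrightarrow> emeasure lebesgue (Bl i) \<le> c * emeasure lebesgue (Bl i - G)"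
  shows "emeasure lebesgue S \<le> c * emeasure lebesgue (\<Union>i\<in>C. Bl i - G)"
proof -
  have UB_sets: "(\<Union>i\<in>C. Bl i) \<in> sets lebesgue" by (rule sets.countable_UN''[OF C(1) sets(1)])
  have "emeasure lebesgue S \<le> emeasure lebesgue ((\<Union>i\<in>C. Bl i) \<union> (S - (\<Union>i\<in>C. Bl i)))"
    by (rule emeasure_mono) (auto intro!: sets.Un UB_sets sets(2))
  also have "\<dots> \<le> emeasure lebesgue (\<Union>i\<in>C. Bl i) + emeasure lebesgue (S - (\<Union>i\<in>C. Bl i))"
    by (rule emeasure_subadditive) (auto intro!: UB_sets sets(2))
  also have "emeasure lebesgue (S - (\<Union>i\<in>C. Bl i)) = 0"
    using C(3) negligible_iff_emeasure0[of "S - (\<Union>i\<in>C. Bl i)"] sets(2) UB_sets by simp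
  also have "emeasure lebesgue (\<Union>i\<in>C. Bl i) = (\<integral>\<^sup>+ i. emeasure lebesgue (Bl i) \<partial>count_space C)"
    using emeasure_UN_countable[OF sets(1) C(1,2)] by simp
  also have "\<dots> \<le> (\<integral>\<^sup>+ i. c * emeasure lebesgue (Bl i - G) \<partial>count_space C)"
    by (rule nn_integral_mono) (simp add: sparse)
  also have "\<dots> = c * emeasure lebesgue (\<Union>i\<in>C. Bl i - G)"
  proof -
    have "(\<integral>\<^sup>+ i. emeasure lebesgue (Bl i - G) \<partial>count_space C) = emeasure lebesgue (\<Union>i\<in>C. Bl i - G)"
    proof (rule emeasure_UN_countable[symmetric, OF _ C(1)])
      show "Bl i - G \<in> sets lebesgue" for i by (intro sets.Diff sets(1,3))
      show "disjoint_family_on (\<lambda>i. Bl i - G) C"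
        using C(2) unfolding disjoint_family_on_def by blast
    qed
    then show ?thesis by (simp add: nn_integral_cmult)
  qed
  finally show ?thesis by simp
qed

lemma emeasure_Icc_le_Diff:
  fixes G :: "real set"
  assumes "a \<le> b" "G \<in> sets lebesgue" "0 < \<epsilon>" "\<epsilon> * (b - a) < measure lebesgue ({a..b} - G)"
  shows "emeasure lebesgue {a..b} \<le> ennreal (1/\<epsilon>) * emeasure lebesgue ({a..b} - G)"
proof -
  have "{a..b} - G \<in> lmeasurable"
    by (rule bounded_set_imp_lmeasurable[OF bounded_subset[OF bounded_closed_interval[of a b]]])
       (auto intro!: sets.Diff assms(2))
  moreover have "emeasure lebesgue {a..b} = ennreal (b - a)"
    using assms(1) by (simp add: emeasure_completion main_part_sets emeasure_lborel_Icc)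
  ultimately show ?thesis
    using assms(3,4) by (simp add: emeasure_eq_measure2 ennreal_mult[symmetric] field_simps ennreal_leI)
qed

text \<open>If every interval missed a proportion \<open>\<epsilon>\<close> of \<open>G\<close>, a Vitali
  cover of \<open>G\<close> by intervals inside a tight open neighbourhood would have more measure than the
  neighbourhood.\<close>

lemma exists_interval_dense:
  assumes G: "G \<in> sets lebesgue" "G \<subseteq> {0..1}" and pos: "0 < measure lebesgue G" and e: "0 < \<epsilon>"
  shows "\<exists>c h. 0 < h \<and> 0 \<le> c - h \<and> c + h \<le> 1 \<and> measure lebesgue ({c-h..c+h} - G) \<le> \<epsilon> * (2*h)"
proof (rule ccontr)
  assume "\<not> ?thesis"
  then have sparse: "\<epsilon> * (2*h) < measure lebesgue ({c-h..c+h} - G)"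
    if "0 < h" "0 \<le> c - h" "c + h \<le> 1" for c h
    using that not_le by blast
  define G' where "G' = G \<inter> {0<..<1}"
  have G'_sets: "G' \<in> sets lebesgue" unfolding G'_def by (intro sets.Int) (use G in simp_all)
  have G'_lmeas: "G' \<in> lmeasurable"
    using G'_sets G by (intro bounded_set_imp_lmeasurable)
      (auto simp: G'_def intro: bounded_subset[OF bounded_closed_interval])
  have "G - G' \<subseteq> {0, 1}" using G by (auto simp: G'_def)
  then have "negligible (G - G')" by (rule negligible_subset[rotated]) auto
  then have "measure lebesgue G' = measure lebesgue G"
    using measure_Diff_null_set[OF G(1), of "G - G'"] by (simp add: negligible_iff_null_sets Diff_Diff_Int G'_def Int_commute)
  then have pos': "0 < \<epsilon> * measure lebesgue G'" using pos e by simp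
  obtain T where T: "open T" "G' \<subseteq> T" "T - G' \<in> lmeasurable"
      "emeasure lebesgue (T - G') < ennreal (\<epsilon> * measure lebesgue G')"
    by (rule sets_lebesgue_outer_open[OF G'_sets pos'])
  have "open (T \<inter> {0<..<1})" "G' \<subseteq> T \<inter> {0<..<1}" using T by (auto simp: G'_def)
  then obtain C where C: "countable C" "\<And>i. i \<in> C \<Longrightarrow> 0 < snd i \<and> cball (fst i) (snd i) \<subseteq> T \<inter> {0<..<1}"
    "disjoint_family_on (\<lambda>i. cball (fst i) (snd i)) C"
    "negligible (G' - (\<Union>i\<in>C. cball (fst i) (snd i)))"
    by (rule disjoint_cballs_cover_open_subset) (assumption | rule that)+
  define Bl where "Bl i = cball (fst i) (snd i)" for i :: "real \<times> real"
  have Bl_sets: "Bl i \<in> sets lebesgue" for i by (simp add: Bl_def)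
  have Bl_sparse: "emeasure lebesgue (Bl i) \<le> ennreal (1/\<epsilon>) * emeasure lebesgue (Bl i - G)" if "i \<in> C" for i
  proof -
    have i: "0 < snd i" "Bl i \<subseteq> {0<..<1}" using C(2)[OF that] by (auto simp: Bl_def)
    then have "0 \<le> fst i - snd i" "fst i + snd i \<le> 1"
      using subsetD[OF i(2), of "fst i - snd i"] subsetD[OF i(2), of "fst i + snd i"]
      by (auto simp: Bl_def dist_real_def)
    then show ?thesis
      unfolding Bl_def cball_eq_atLeastAtMost using sparse[of "snd i" "fst i"] i(1) e G(1)
      by (intro emeasure_Icc_le_Diff) auto
  qed
  have "emeasure lebesgue G' \<le> ennreal (1/\<epsilon>) * emeasure lebesgue (\<Union>i\<in>C. Bl i - G)"
    using C(1,3,4) by (intro emeasure_le_disjoint_cover_Diff Bl_sparse Bl_sets G'_sets G(1)) (simp_all add: Bl_def)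
  also have "\<dots> \<le> ennreal (1/\<epsilon>) * emeasure lebesgue (T - G')"
  proof (intro mult_left_mono emeasure_mono)
    show "(\<Union>i\<in>C. Bl i - G) \<subseteq> T - G'" using C(2) by (force simp: Bl_def G'_def)
    show "T - G' \<in> sets lebesgue" using T(3) by (simp add: fmeasurable_def)
  qed simp
  also have "\<dots> < ennreal (1/\<epsilon>) * ennreal (\<epsilon> * measure lebesgue G')"
    by (rule ennreal_mult_strict_left_mono[OF T(4)]) (use e in auto)
  also have "\<dots> = emeasure lebesgue G'"
    using e G'_lmeas by (simp add: ennreal_mult[symmetric] emeasure_eq_measure2)
  finally show False by simp
qed

section \<open>Tail products of lacunary SU(1,1) factors\<close>

lemma mat2_mult:
  "mat2 a b c d ** mat2 a' b' c' d' = mat2 (a*a' + b*c') (a*b' + b*d') (c*a' + d*c') (c*b' + d*d')"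
  unfolding mat2_def matrix_matrix_mult_def by (simp add: vec_eq_iff sum_2 forall_2)

lemma mat1_eq_mat2: "mat 1 = mat2 1 0 0 1"
  unfolding mat2_def by (simp add: vec_eq_iff forall_2 mat_def)

lemma mat2_nth [simp]:
  "mat2 a b c d $ 1 $ 1 = a" "mat2 a b c d $ 1 $ 2 = b" "mat2 a b c d $ 2 $ 1 = c" "mat2 a b c d $ 2 $ 2 = d"
  by (simp_all add: mat2_def)

lemma mat2_eq_iff: "mat2 a b c d = mat2 a' b' c' d' \<longleftrightarrow> a = a' \<and> b = b' \<and> c = c' \<and> d = d'"
  by (metis mat2_nth)

lemma prodL_add: "prodL F (M + n) = prodL F M ** prodL (\<lambda>j. F (M + j)) n"
  by (induction n) (simp_all add: matrix_mul_assoc)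

lemma mat2_mult_unimodular_entry:
  assumes "mat2 a b c d ** mat2 x y z u = mat2 x' y' z' u'" and "a * d - b * c = 1"
  shows "u = a * u' - c * y'"
proof -
  have "y' = a * y + b * u" "u' = c * y + d * u"
    using assms(1) by (simp_all add: mat2_mult mat2_eq_iff)
  then have "a * u' - c * y' = (a * d - b * c) * u" by (simp add: algebra_simps)
  with assms(2) show ?thesis by simp
qed

lemma norm_sq_diff_hyperbolic:
  fixes a :: real and b x z :: complex
  shows "(cmod (of_real a * x + b * z))\<^sup>2 - (cmod (cnj b * x + of_real a * z))\<^sup>2
     = (a\<^sup>2 - (cmod b)\<^sup>2) * ((cmod x)\<^sup>2 - (cmod z)\<^sup>2)"
  unfolding cmod_power2 by (simp add: power2_eq_square algebra_simps)

lemma one_plus_notin_nonpos_Reals: "cmod u < 1 \<Longrightarrow> 1 + u \<notin> \<real>\<^sub>\<le>\<^sub>0"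
  using abs_Re_le_cmod[of u] by (auto simp: complex_nonpos_Reals_iff)

lemma hyperbolic_step_disc:
  fixes a :: real and b z :: complex
  assumes "0 < a" "a\<^sup>2 - (cmod b)\<^sup>2 = 1" "cmod z \<le> 1"
  shows "of_real a + b * z \<noteq> 0 \<and> cmod (cnj b + of_real a * z) \<le> cmod (of_real a + b * z)"
proof
  have "cmod (b * z) < a"
    using assms mult_left_le[of "cmod z" "cmod b"] power2_less_imp_less[of "cmod b" a]
    by (simp add: norm_mult)
  moreover have "a - cmod (b * z) \<le> cmod (of_real a + b * z)"
    using norm_triangle_ineq2[of "of_real a" "- (b * z)"] assms(1) by simp
  ultimately show "of_real a + b * z \<noteq> 0" by auto
  have "(cmod (of_real a * 1 + b * z))\<^sup>2 - (cmod (cnj b * 1 + of_real a * z))\<^sup>2 = 1 - (cmod z)\<^sup>2"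
    using norm_sq_diff_hyperbolic[of a 1 b z] assms(2) by simp
  moreover have "(cmod z)\<^sup>2 \<le> 1" using assms(3) by (simp add: power_le_one)
  ultimately have "(cmod (cnj b + of_real a * z))\<^sup>2 \<le> (cmod (of_real a + b * z))\<^sup>2"
    by (simp only: mult_1_right)
  then show "cmod (cnj b + of_real a * z) \<le> cmod (of_real a + b * z)"
    by (rule power2_le_imp_le) simp
qed

lemma factor_circ:
  "factor m A B t j
     = mat2 (of_real (A j)) (B j * circ t ^ m j) (cnj (B j) * cnj (circ t ^ m j)) (of_real (A j))"
  unfolding factor_def circ_power by (simp add: cis_cnj)

locale lacunary_su11 =
  fixes m :: "nat \<Rightarrow> nat" and A :: "nat \<Rightarrow> real" and B :: "nat \<Rightarrow> complex"
  assumes m_pos: "\<And>j. 0 < m j"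
    and m_lacunary: "\<And>j. 3 * m j \<le> m (Suc j)"
    and A_pos: "\<And>j. 0 < A j"
    and A_B: "\<And>j. (A j)\<^sup>2 - (cmod (B j))\<^sup>2 = 1"
begin

definition tail_deg :: "nat \<Rightarrow> nat \<Rightarrow> nat" where
  "tail_deg M n = (\<Sum>i<n. m (M + i))"

lemma tail_deg_0 [simp]: "tail_deg M 0 = 0"
  by (simp add: tail_deg_def)

lemma tail_deg_Suc: "tail_deg M (Suc n) = tail_deg M n + m (M + n)"
  by (simp add: tail_deg_def)

lemma two_tail_deg_less: "2 * tail_deg M n < m (M + n)"
proof (induction n)
  case 0
  show ?case using m_pos by simp
next
  case (Suc n)
  then show ?case using m_lacunary[of "M + n"] by (simp add: tail_deg_Suc)
qed

lemma tail_deg_le: "tail_deg M n \<le> m (M + n)"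
  using two_tail_deg_less[of M n] by simp

lemma self_le_m: "j \<le> m j"
proof (induction j)
  case (Suc j)
  then show ?case using m_lacunary[of j] m_pos[of j] by linarith
qed simp

text \<open>On the unit circle the product of the factors \<open>M, ..., M + n - 1\<close> is
  \<open>mat2 (cnj X) Y (cnj Y) X\<close>, and there \<open>U = w ^ D * cnj X\<close> and \<open>V = w ^ D * cnj Y\<close> with
  \<open>D = tail_deg M n\<close>. Unlike their conjugates, the polynomials \<open>X, V, Y, U\<close> are holomorphic
  in the disc.\<close>

fun tail_X :: "nat \<Rightarrow> nat \<Rightarrow> complex \<Rightarrow> complex" and tail_V :: "nat \<Rightarrow> nat \<Rightarrow> complex \<Rightarrow> complex" where
  "tail_X M 0 w = 1"
| "tail_X M (Suc n) w =
     of_real (A (M+n)) * tail_X M n w + B (M+n) * w ^ (m (M+n) - tail_deg M n) * tail_V M n w"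
| "tail_V M 0 w = 0"
| "tail_V M (Suc n) w =
     cnj (B (M+n)) * w ^ tail_deg M n * tail_X M n w + of_real (A (M+n)) * w ^ m (M+n) * tail_V M n w"

fun tail_Y :: "nat \<Rightarrow> nat \<Rightarrow> complex \<Rightarrow> complex" and tail_U :: "nat \<Rightarrow> nat \<Rightarrow> complex \<Rightarrow> complex" where
  "tail_Y M 0 w = 0"
| "tail_Y M (Suc n) w =
     of_real (A (M+n)) * tail_Y M n w + B (M+n) * w ^ (m (M+n) - tail_deg M n) * tail_U M n w"
| "tail_U M 0 w = 1"
| "tail_U M (Suc n) w =
     cnj (B (M+n)) * w ^ tail_deg M n * tail_Y M n w + of_real (A (M+n)) * w ^ m (M+n) * tail_U M n w"

lemma tail_UV_circle:
  assumes w: "cmod w = 1"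
  shows "tail_U M n w = w ^ tail_deg M n * cnj (tail_X M n w) \<and> tail_V M n w = w ^ tail_deg M n * cnj (tail_Y M n w)"
proof (induction n)
  case 0
  show ?case by simp
next
  case (Suc n)
  define d where "d = tail_deg M n"
  define k where "k = m (M+n) - d"
  have mk: "m (M+n) = d + k" using tail_deg_le[of M n] by (simp add: d_def k_def)
  have w0: "w \<noteq> 0" using w by auto
  have cw: "cnj w = inverse w"
    using complex_norm_square[of w] w by (simp add: inverse_unique)
  from Suc w0 show ?case
    by (simp add: cw tail_deg_Suc d_def[symmetric] k_def[symmetric] mk power_add power_inverse field_simps)
qed

lemma prodL_tail_circle:
  "prodL (\<lambda>j. factor m A B t (M + j)) n =
     mat2 (cnj (tail_X M n (circ t))) (tail_Y M n (circ t)) (cnj (tail_Y M n (circ t))) (tail_X M n (circ t))"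
proof (induction n)
  case 0
  show ?case by (simp add: mat1_eq_mat2)
next
  case (Suc n)
  define w where "w = circ t"
  define d where "d = tail_deg M n"
  define k where "k = m (M+n) - d"
  have mk: "m (M+n) = d + k" using tail_deg_le[of M n] by (simp add: d_def k_def)
  have w0: "w \<noteq> 0" by (simp add: w_def)
  have cw: "cnj w = inverse w" by (simp add: w_def cnj_circ)
  have UV: "tail_U M n w = w ^ d * cnj (tail_X M n w)" "tail_V M n w = w ^ d * cnj (tail_Y M n w)"
    using tail_UV_circle[of w M n] by (simp_all add: w_def d_def)
  show ?case
    unfolding prodL.simps Suc.IH
    unfolding factor_circ w_def[symmetric] mat2_mult
    using w0 by (simp add: mat2_eq_iff UV cw d_def[symmetric] k_def[symmetric] mk power_add power_inverse field_simps)
qed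

lemma norm_B_less_A: "cmod (B j) < A j"
proof (rule power2_less_imp_less)
  show "(cmod (B j))\<^sup>2 < (A j)\<^sup>2" using A_B[of j] by linarith
qed (use A_pos[of j] in simp)

lemma one_le_A: "1 \<le> A j"
proof -
  have "1 \<le> (A j)\<^sup>2" using A_B[of j] zero_le_power2[of "cmod (B j)"] by linarith
  then show ?thesis using power2_le_imp_le[of 1 "A j"] A_pos[of j] by simp
qed

lemma tail_norm_diff_circle:
  assumes w: "cmod w = 1"
  shows "(cmod (tail_X M n w))\<^sup>2 - (cmod (tail_V M n w))\<^sup>2 = 1"
proof (induction n)
  case 0
  show ?case by simp
next
  case (Suc n)
  define a where "a = A (M+n)"
  define b where "b = B (M+n)"
  define k where "k = m (M+n) - tail_deg M n"
  have mk: "m (M+n) = tail_deg M n + k" using tail_deg_le[of M n] by (simp add: k_def)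
  have "tail_V M (Suc n) w = w ^ tail_deg M n * (cnj b * tail_X M n w + of_real a * (w ^ k * tail_V M n w))"
    by (simp add: a_def b_def mk power_add algebra_simps)
  then have "cmod (tail_V M (Suc n) w) = cmod (cnj b * tail_X M n w + of_real a * (w ^ k * tail_V M n w))"
    using w by (simp add: norm_mult norm_power)
  moreover have "tail_X M (Suc n) w = of_real a * tail_X M n w + b * (w ^ k * tail_V M n w)"
    by (simp add: a_def b_def k_def)
  ultimately have "(cmod (tail_X M (Suc n) w))\<^sup>2 - (cmod (tail_V M (Suc n) w))\<^sup>2
     = (a\<^sup>2 - (cmod b)\<^sup>2) * ((cmod (tail_X M n w))\<^sup>2 - (cmod (w ^ k * tail_V M n w))\<^sup>2)"
    by (simp only: norm_sq_diff_hyperbolic)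
  also have "\<dots> = 1" using A_B Suc w by (simp add: a_def b_def norm_mult norm_power)
  finally show ?case .
qed

lemma norm_tail_V_circle: "cmod w = 1 \<Longrightarrow> cmod (tail_V M n w) = cmod (tail_Y M n w)"
  using tail_UV_circle[of w M n] by (simp add: norm_mult norm_power)

text \<open>Each step multiplies \<open>X\<close> by \<open>a + b z\<close> and produces \<open>V\<close> from \<open>w ^ D X (cnj b + a z)\<close>, where
  \<open>z = w ^ k V / X\<close> lies in the closed disc.\<close>

lemma tail_X_nonzero_dominates_V:
  assumes w: "cmod w \<le> 1"
  shows "tail_X M n w \<noteq> 0 \<and> cmod (tail_V M n w) \<le> cmod (tail_X M n w)"
proof (induction n)
  case 0
  show ?case by simp
next
  case (Suc n)
  define a where "a = A (M+n)"
  define b where "b = B (M+n)"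
  define d where "d = tail_deg M n"
  define k where "k = m (M+n) - d"
  define X where "X = tail_X M n w"
  define z where "z = w ^ k * tail_V M n w / X"
  have mk: "m (M+n) = d + k" using tail_deg_le[of M n] by (simp add: d_def k_def)
  have X0: "X \<noteq> 0" using Suc by (simp add: X_def)
  have "cmod (w ^ k) * cmod (tail_V M n w) \<le> 1 * cmod X"
    using Suc w by (intro mult_mono) (auto simp: X_def norm_power power_le_one)
  then have z1: "cmod z \<le> 1"
    using X0 by (simp add: z_def norm_mult norm_divide divide_le_eq_1)
  have XS: "tail_X M (Suc n) w = X * (of_real a + b * z)"
    using X0 by (simp add: z_def X_def a_def b_def d_def k_def field_simps)
  have VS: "tail_V M (Suc n) w = w ^ d * X * (cnj b + of_real a * z)"
    using X0 by (simp add: z_def X_def a_def b_def d_def mk field_simps power_add)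
  have nz: "of_real a + b * z \<noteq> 0" and "cmod (cnj b + of_real a * z) \<le> cmod (of_real a + b * z)"
    using hyperbolic_step_disc[OF A_pos A_B z1] by (simp_all add: a_def b_def)
  then have "cmod (w ^ d) * (cmod X * cmod (cnj b + of_real a * z)) \<le> 1 * (cmod X * cmod (of_real a + b * z))"
    using w by (intro mult_mono mult_left_mono) (auto simp: norm_power power_le_one)
  then have "cmod (tail_V M (Suc n) w) \<le> cmod (tail_X M (Suc n) w)"
    unfolding XS VS by (simp add: norm_mult mult.assoc)
  moreover have "tail_X M (Suc n) w \<noteq> 0"
    unfolding XS using X0 nz by simp
  ultimately show ?case by blast
qed

lemma holomorphic_tail:
  "tail_X M n holomorphic_on S \<and> tail_V M n holomorphic_on S \<and>
   tail_Y M n holomorphic_on S \<and> tail_U M n holomorphic_on S"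
  by (induction n) (auto intro!: holomorphic_intros simp del: of_real_add)

lemma continuous_on_tail:
  "continuous_on S (tail_X M n)" "continuous_on S (tail_V M n)"
  "continuous_on S (tail_Y M n)" "continuous_on S (tail_U M n)"
  using holomorphic_tail[of M n S] by (auto intro: holomorphic_on_imp_continuous_on)

definition tail_ratio :: "nat \<Rightarrow> nat \<Rightarrow> complex \<Rightarrow> complex" where
  "tail_ratio M n w = w ^ (m (M+n) - tail_deg M n) * tail_V M n w / tail_X M n w"

lemma norm_tail_ratio_le:
  assumes "cmod w \<le> 1"
  shows "cmod (tail_ratio M n w) \<le> cmod w ^ (m (M+n) - tail_deg M n)"
proof -
  have "cmod (tail_V M n w) / cmod (tail_X M n w) \<le> 1"
    using tail_X_nonzero_dominates_V[OF assms] by simp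
  then have "cmod w ^ (m (M+n) - tail_deg M n) * (cmod (tail_V M n w) / cmod (tail_X M n w))
      \<le> cmod w ^ (m (M+n) - tail_deg M n) * 1"
    by (intro mult_left_mono) auto
  then show ?thesis by (simp add: tail_ratio_def norm_mult norm_divide norm_power)
qed

lemma tail_X_Suc_eq:
  assumes "cmod w \<le> 1"
  shows "tail_X M (Suc n) w = tail_X M n w * (of_real (A (M+n)) + B (M+n) * tail_ratio M n w)"
  using tail_X_nonzero_dominates_V[OF assms, of M n] by (simp add: tail_ratio_def field_simps)

lemma norm_tail_step_less:
  assumes "cmod w \<le> 1"
  shows "cmod (B (M+n) / of_real (A (M+n)) * tail_ratio M n w) < 1"
proof -
  have "cmod (tail_ratio M n w) \<le> 1"
    using norm_tail_ratio_le[OF assms, of M n] assms by (meson norm_ge_zero order_trans power_le_one)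
  then have "cmod (B (M+n)) * cmod (tail_ratio M n w) < A (M+n)"
    using norm_B_less_A[of "M+n"] mult_left_le[of _ "cmod (B (M+n))"] by (meson le_less_trans norm_ge_zero)
  then show ?thesis using A_pos[of "M+n"] by (simp add: norm_mult norm_divide)
qed

lemma norm_tail_X_ge:
  assumes w: "cmod w \<le> 1"
  shows "(\<Prod>i<n. A (M+i)) * (1 - (\<Sum>i<n. cmod w ^ (m (M+i) - tail_deg M i))) \<le> cmod (tail_X M n w)"
proof (induction n)
  case 0
  show ?case by simp
next
  case (Suc n)
  define a where "a = A (M+n)"
  define x where "x = cmod w ^ (m (M+n) - tail_deg M n)"
  define P where "P = (\<Prod>i<n. A (M+i))"
  define S where "S = (\<Sum>i<n. cmod w ^ (m (M+i) - tail_deg M i))"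
  have a0: "0 < a" using A_pos by (simp add: a_def)
  have P0: "0 < P" unfolding P_def using A_pos by (intro prod_pos) auto
  have x0: "0 \<le> x" "x \<le> 1" using w by (auto simp: x_def power_le_one)
  have S0: "0 \<le> S" unfolding S_def by (intro sum_nonneg) auto
  have "cmod (B (M+n) * tail_ratio M n w) \<le> a * x"
    using norm_B_less_A[of "M+n"] norm_tail_ratio_le[OF w, of M n]
    by (simp add: norm_mult a_def x_def mult_mono')
  then have step: "a * (1 - x) \<le> cmod (of_real a + B (M+n) * tail_ratio M n w)"
    using norm_triangle_ineq2[of "of_real a" "- B (M+n) * tail_ratio M n w"] a0
    by (simp add: algebra_simps)
  have goal_eq: "(\<Prod>i<Suc n. A (M+i)) * (1 - (\<Sum>i<Suc n. cmod w ^ (m (M+i) - tail_deg M i)))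
      = P * a * (1 - S - x)"
    by (simp add: P_def S_def a_def x_def algebra_simps)
  show ?case
  proof (cases "0 \<le> 1 - S")
    case False
    then have "P * a * (1 - S - x) \<le> 0" using P0 a0 x0 by (intro mult_nonneg_nonpos) auto
    then show ?thesis unfolding goal_eq by (meson norm_ge_zero order_trans)
  next
    case True
    have "P * a * (1 - S - x) \<le> (P * (1 - S)) * (a * (1 - x))"
      using P0 a0 x0 S0 mult_left_mono[of "1 - S - x" "(1 - S) * (1 - x)" "P * a"]
      by (simp add: algebra_simps)
    also have "\<dots> \<le> cmod (tail_X M n w) * cmod (of_real a + B (M+n) * tail_ratio M n w)"
      using Suc True step a0 x0 by (intro mult_mono) (auto simp: P_def S_def)
    also have "\<dots> = cmod (tail_X M (Suc n) w)"
      using tail_X_Suc_eq[OF w] by (simp add: norm_mult a_def)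
    finally show ?thesis unfolding goal_eq .
  qed
qed

definition tail_log :: "nat \<Rightarrow> nat \<Rightarrow> complex \<Rightarrow> complex" where
  "tail_log M n w = (\<Sum>i<n. Ln (1 + B (M+i) / of_real (A (M+i)) * tail_ratio M i w))"

lemma tail_X_eq_exp_tail_log:
  assumes w: "cmod w \<le> 1"
  shows "tail_X M n w = of_real (\<Prod>i<n. A (M+i)) * exp (tail_log M n w)"
proof (induction n)
  case 0
  show ?case by (simp add: tail_log_def)
next
  case (Suc n)
  define u where "u = 1 + B (M+n) / of_real (A (M+n)) * tail_ratio M n w"
  have u0: "u \<noteq> 0"
    using one_plus_notin_nonpos_Reals[OF norm_tail_step_less[OF w, of M n]] by (auto simp: u_def)
  have a0: "A (M+n) \<noteq> 0" using A_pos[of "M+n"] by simp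
  have "tail_X M (Suc n) w = tail_X M n w * (of_real (A (M+n)) * u)"
    unfolding tail_X_Suc_eq[OF w] u_def using a0 by (simp add: field_simps)
  also have "\<dots> = of_real (\<Prod>i<Suc n. A (M+i)) * (exp (tail_log M n w) * exp (Ln u))"
    using Suc u0 by simp
  also have "\<dots> = of_real (\<Prod>i<Suc n. A (M+i)) * exp (tail_log M (Suc n) w)"
    by (simp add: tail_log_def u_def exp_add)
  finally show ?case .
qed

lemma continuous_on_tail_ratio: "continuous_on (cball 0 1) (tail_ratio M n)"
  unfolding tail_ratio_def[abs_def] using tail_X_nonzero_dominates_V
  by (intro continuous_intros continuous_on_tail) auto

lemma holomorphic_on_tail_ratio: "tail_ratio M n holomorphic_on ball 0 1"
  unfolding tail_ratio_def[abs_def] using tail_X_nonzero_dominates_V holomorphic_tail[of M n]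
  by (intro holomorphic_intros) auto

lemma continuous_on_tail_log: "continuous_on (cball 0 1) (tail_log M n)"
  unfolding tail_log_def[abs_def] using norm_tail_step_less one_plus_notin_nonpos_Reals
  by (intro continuous_intros continuous_on_Ln' continuous_on_mult_left continuous_on_tail_ratio) auto

lemma holomorphic_on_tail_log: "tail_log M n holomorphic_on ball 0 1"
  unfolding tail_log_def[abs_def] using norm_tail_step_less one_plus_notin_nonpos_Reals
  by (intro holomorphic_intros holomorphic_on_Ln' holomorphic_on_tail_ratio) auto

lemma Poisson_integral_ln_norm_tail_X:
  assumes "cmod w < 1"
  shows "((\<lambda>t. poisson_kernel w t * ln (cmod (tail_X M n (circ t)))) has_integral
           ln (cmod (tail_X M n w))) {0..1}"
  using A_pos by (intro Poisson_integral_ln_norm[OF continuous_on_tail_log holomorphic_on_tail_log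
        tail_X_eq_exp_tail_log prod_pos assms]) auto

definition tail_energy :: "nat \<Rightarrow> nat \<Rightarrow> real" where
  "tail_energy M n = integral {0..1} (\<lambda>t. (cmod (tail_X M n (circ t)))\<^sup>2)"

lemma has_integral_tail_energy: "((\<lambda>t. (cmod (tail_X M n (circ t)))\<^sup>2) has_integral tail_energy M n) {0..1}"
  unfolding tail_energy_def
  by (intro integrable_integral integrable_continuous_interval continuous_intros
      continuous_on_compose2[OF continuous_on_tail(1) continuous_on_circ]) auto

text \<open>On the circle \<open>tail_cross M n w = cnj X * w ^ k * V\<close> with \<open>k = m (M+n) - D\<close>, the cross term of
  \<open>|a X + b w ^ k V|\<^sup>2\<close>; it is holomorphic and vanishes at \<open>0\<close> because \<open>k > D\<close>, so its mean is zero.\<close>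

definition tail_cross :: "nat \<Rightarrow> nat \<Rightarrow> complex \<Rightarrow> complex" where
  "tail_cross M n w = tail_U M n w * tail_V M n w * w ^ (m (M+n) - 2 * tail_deg M n)"

lemma has_integral_tail_cross: "((\<lambda>t. tail_cross M n (circ t)) has_integral 0) {0..1}"
proof -
  have "continuous_on (cball 0 1) (tail_cross M n)"
    unfolding tail_cross_def[abs_def] by (intro continuous_intros continuous_on_tail)
  moreover have "tail_cross M n holomorphic_on ball 0 1"
    unfolding tail_cross_def[abs_def] using holomorphic_tail[of M n "ball 0 1"] by (intro holomorphic_intros) auto
  ultimately have "((\<lambda>t. tail_cross M n (circ t)) has_integral tail_cross M n 0) {0..1}"
    by (rule mean_value_unit_circle)
  moreover have "tail_cross M n 0 = 0"
    using two_tail_deg_less[of M n] by (simp add: tail_cross_def zero_power)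
  ultimately show ?thesis by simp
qed

lemma norm_tail_X_Suc_sq_circle:
  assumes w: "cmod w = 1"
  shows "(cmod (tail_X M (Suc n) w))\<^sup>2 = ((A (M+n))\<^sup>2 + (cmod (B (M+n)))\<^sup>2) * (cmod (tail_X M n w))\<^sup>2
           - (cmod (B (M+n)))\<^sup>2 + 2 * A (M+n) * Re (B (M+n) * tail_cross M n w)"
proof -
  define d where "d = tail_deg M n"
  define k where "k = m (M+n) - d"
  define a where "a = A (M+n)"
  define b where "b = B (M+n)"
  have kd: "k = d + (m (M+n) - 2 * d)"
    using two_tail_deg_less[of M n] by (simp add: d_def k_def)
  have U: "tail_U M n w = w ^ d * cnj (tail_X M n w)"
    using tail_UV_circle[OF w] by (simp add: d_def)
  have XS: "tail_X M (Suc n) w = of_real a * tail_X M n w + b * w ^ k * tail_V M n w"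
    by (simp add: a_def b_def d_def k_def)
  have cross: "cnj (tail_X M n w) * (b * w ^ k * tail_V M n w) = b * tail_cross M n w"
    unfolding tail_cross_def U d_def[symmetric] by (subst kd) (simp add: power_add algebra_simps)
  have norm_V: "(cmod (b * w ^ k * tail_V M n w))\<^sup>2 = (cmod b)\<^sup>2 * ((cmod (tail_X M n w))\<^sup>2 - 1)"
    using tail_norm_diff_circle[OF w, of M n] w by (simp add: norm_mult norm_power power_mult_distrib)
  have expand: "(cmod (of_real a * x + z))\<^sup>2 = a\<^sup>2 * (cmod x)\<^sup>2 + (cmod z)\<^sup>2 + 2 * a * Re (cnj x * z)"
    for x z :: complex
    unfolding cmod_power2 by (simp add: power2_eq_square algebra_simps)
  show ?thesis
    unfolding XS expand cross norm_V a_def[symmetric] b_def[symmetric] by (simp add: algebra_simps)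
qed

lemma tail_energy_Suc:
  "tail_energy M (Suc n) = ((A (M+n))\<^sup>2 + (cmod (B (M+n)))\<^sup>2) * tail_energy M n - (cmod (B (M+n)))\<^sup>2"
proof -
  define a where "a = A (M+n)"
  define b where "b = B (M+n)"
  have "bounded_linear (\<lambda>z. 2 * a * Re (b * z))"
    using bounded_linear_compose[OF bounded_linear_Re bounded_linear_mult_right[of b]]
    by (intro bounded_linear_intros) (simp add: o_def)
  from has_integral_linear[OF has_integral_tail_cross this]
  have "((\<lambda>t. 2 * a * Re (b * tail_cross M n (circ t))) has_integral 0) {0..1}"
    by (simp add: o_def)
  then have "((\<lambda>t. (a\<^sup>2 + (cmod b)\<^sup>2) * (cmod (tail_X M n (circ t)))\<^sup>2 - (cmod b)\<^sup>2
      + 2 * a * Re (b * tail_cross M n (circ t)))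
      has_integral ((a\<^sup>2 + (cmod b)\<^sup>2) * tail_energy M n - (cmod b)\<^sup>2 + 0)) {0..1}"
    using has_integral_const_real[of "(cmod b)\<^sup>2" 0 1]
    by (intro has_integral_add has_integral_diff has_integral_mult_right has_integral_tail_energy) auto
  then have "((\<lambda>t. (cmod (tail_X M (Suc n) (circ t)))\<^sup>2) has_integral
      ((a\<^sup>2 + (cmod b)\<^sup>2) * tail_energy M n - (cmod b)\<^sup>2)) {0..1}"
    by (simp only: norm_tail_X_Suc_sq_circle[OF norm_circ] a_def b_def add_0_right)
  then show ?thesis
    unfolding a_def b_def using has_integral_tail_energy has_integral_unique by blast
qed

lemma tail_energy_le: "tail_energy M n \<le> (\<Prod>i<n. (A (M+i))\<^sup>2 + (cmod (B (M+i)))\<^sup>2)"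
proof (induction n)
  case 0
  show ?case by (simp add: tail_energy_def)
next
  case (Suc n)
  have "tail_energy M (Suc n) \<le> ((A (M+n))\<^sup>2 + (cmod (B (M+n)))\<^sup>2) * tail_energy M n"
    by (simp add: tail_energy_Suc)
  also have "\<dots> \<le> ((A (M+n))\<^sup>2 + (cmod (B (M+n)))\<^sup>2) * (\<Prod>i<n. (A (M+i))\<^sup>2 + (cmod (B (M+i)))\<^sup>2)"
    using Suc by (intro mult_left_mono) auto
  finally show ?case by (simp add: mult.commute)
qed

lemma prodL_factor_circ:
  "prodL (factor m A B t) N =
     mat2 (cnj (tail_X 0 N (circ t))) (tail_Y 0 N (circ t)) (cnj (tail_Y 0 N (circ t))) (tail_X 0 N (circ t))"
  using prodL_tail_circle[of t 0 N] by simp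

text \<open>The tail product is the inverse of the product of the first \<open>M\<close> factors times the product of
  the first \<open>M + n\<close> ones, and inverting an element of SU(1,1) does not change the size of its entries.\<close>

lemma norm_tail_X_le_of_bounded:
  assumes "\<And>N. cmod (tail_X 0 N (circ t)) \<le> k \<and> cmod (tail_Y 0 N (circ t)) \<le> k"
  shows "cmod (tail_X M n (circ t)) \<le> 2 * k\<^sup>2"
proof -
  define a where "a = tail_X 0 M (circ t)"
  define b where "b = tail_Y 0 M (circ t)"
  define a' where "a' = tail_X 0 (M+n) (circ t)"
  define b' where "b' = tail_Y 0 (M+n) (circ t)"
  have "mat2 (cnj a) b (cnj b) a ** prodL (\<lambda>j. factor m A B t (M + j)) n = mat2 (cnj a') b' (cnj b') a'"
    using prodL_add[of "factor m A B t" M n] by (simp add: prodL_factor_circ a_def b_def a'_def b'_def)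
  moreover have "cnj a * a - b * cnj b = 1"
  proof -
    have "(cmod a)\<^sup>2 - (cmod b)\<^sup>2 = 1"
      using tail_norm_diff_circle[of "circ t" 0 M] norm_tail_V_circle[of "circ t" 0 M] by (simp add: a_def b_def)
    then have "a * cnj a - b * cnj b = 1"
      by (simp only: complex_norm_square[symmetric] of_real_diff[symmetric]) simp
    then show ?thesis by (simp add: mult.commute)
  qed
  ultimately have "tail_X M n (circ t) = cnj a * a' - cnj b * b'"
    unfolding prodL_tail_circle by (rule mat2_mult_unimodular_entry)
  then have "cmod (tail_X M n (circ t)) \<le> cmod a * cmod a' + cmod b * cmod b'"
    using norm_triangle_ineq4[of "cnj a * a'" "cnj b * b'"] by (simp add: norm_mult)
  also have "\<dots> \<le> k * k + k * k"
    using assms[of M] assms[of "M+n"] order_trans[OF norm_ge_zero conjunct1[OF assms[of M]]]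
    by (intro add_mono mult_mono) (auto simp: a_def b_def a'_def b'_def)
  finally show ?thesis by (simp add: power2_eq_square)
qed

lemma entries_bounded_of_Bseq:
  assumes "Bseq (prodL (factor m A B t))"
  obtains k :: nat where "\<And>N. cmod (tail_X 0 N (circ t)) \<le> k \<and> cmod (tail_Y 0 N (circ t)) \<le> k"
proof -
  obtain C where C: "\<And>N. norm (prodL (factor m A B t) N) \<le> C"
    using assms unfolding Bseq_def by auto
  obtain k :: nat where k: "C \<le> real k" using real_arch_simple by blast
  have entry: "cmod (P $ i $ j) \<le> norm P" for P :: "complex^2^2" and i j
    using Finite_Cartesian_Product.norm_nth_le[of "P $ i" j]
      Finite_Cartesian_Product.norm_nth_le[of P i] by linarith
  have "cmod (tail_X 0 N (circ t)) \<le> k \<and> cmod (tail_Y 0 N (circ t)) \<le> k" for N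
    using entry[of "prodL (factor m A B t) N" 2 2] entry[of "prodL (factor m A B t) N" 1 2] C[of N] k
    unfolding prodL_factor_circ mat2_nth by linarith
  then show ?thesis by (rule that)
qed

lemma bounded_tails_on_positive_measure:
  assumes E: "E \<in> sets lebesgue" "E \<subseteq> {0..1}" "0 < emeasure lebesgue E"
    and bounded: "\<And>t. t \<in> E \<Longrightarrow> Bseq (prodL (factor m A B t))"
  obtains G K where "G \<in> sets lebesgue" "G \<subseteq> E" "0 < measure lebesgue G" "1 \<le> K"
    "\<And>t M n. t \<in> G \<Longrightarrow> cmod (tail_X M n (circ t)) \<le> K"
proof -
  define G where "G k = {t \<in> E. \<forall>N. cmod (tail_X 0 N (circ t)) \<le> real k \<and> cmod (tail_Y 0 N (circ t)) \<le> real k}"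
    for k :: nat
  have "E \<subseteq> (\<Union>k. G k)"
    using entries_bounded_of_Bseq[OF bounded] by (auto simp: G_def) metis
  moreover have G_sets: "G k \<in> sets lebesgue" for k
  proof -
    have "closed {t. \<forall>N. cmod (tail_X 0 N (circ t)) \<le> real k \<and> cmod (tail_Y 0 N (circ t)) \<le> real k}"
      by (intro closed_Collect_all closed_Collect_conj closed_Collect_le continuous_intros
          continuous_on_compose2[OF continuous_on_tail(1) continuous_on_circ]
          continuous_on_compose2[OF continuous_on_tail(3) continuous_on_circ]) auto
    then show ?thesis using E(1) by (simp add: G_def Collect_conj_eq sets.Int)
  qed
  ultimately obtain k where k: "0 < emeasure lebesgue (G k)"
    using E(1,3) by (rule emeasure_pos_in_countable_cover)
  have "G k \<in> lmeasurable"
    using G_sets E(2) by (intro bounded_set_imp_lmeasurable) (auto simp: G_def intro: bounded_subset[OF bounded_closed_interval])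
  then have "0 < measure lebesgue (G k)" using k by (simp add: emeasure_eq_measure2)
  moreover have "cmod (tail_X M n (circ t)) \<le> 2 * (real k + 1)\<^sup>2" if "t \<in> G k" for t M n
  proof -
    have "cmod (tail_X M n (circ t)) \<le> 2 * (real k)\<^sup>2"
      using that by (intro norm_tail_X_le_of_bounded) (auto simp: G_def)
    also have "\<dots> \<le> 2 * (real k + 1)\<^sup>2" by (simp add: power_mono)
    finally show ?thesis .
  qed
  moreover have "1 \<le> (real k + 1)\<^sup>2" by (rule one_le_power) simp
  then have "1 \<le> 2 * (real k + 1)\<^sup>2" by linarith
  ultimately show ?thesis
    using G_sets by (intro that[of "G k" "2 * (real k + 1)\<^sup>2"]) (auto simp: G_def)
qed

lemma tail_powers_sum_le_half:
  fixes r :: real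
  assumes "0 \<le> r" "r < 1"
  obtains M where "\<And>n. (\<Sum>i<n. r ^ (m (M+i) - tail_deg M i)) \<le> 1/2"
proof -
  define s where "s = sqrt r"
  have s: "0 \<le> s" "s < 1" "s\<^sup>2 = r" using assms by (auto simp: s_def)
  obtain M where M: "s ^ M < (1 - s) / 2"
    using real_arch_pow_inv[of "(1 - s) / 2" s] s by auto
  have "(\<Sum>i<n. r ^ (m (M+i) - tail_deg M i)) \<le> 1/2" for n
  proof -
    have "r ^ (m (M+i) - tail_deg M i) \<le> s ^ M * s ^ i" for i
    proof -
      have "M + i \<le> 2 * (m (M+i) - tail_deg M i)"
        using two_tail_deg_less[of M i] self_le_m[of "M+i"] by linarith
      then have "s ^ (2 * (m (M+i) - tail_deg M i)) \<le> s ^ (M + i)"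
        using s by (intro power_decreasing) auto
      then show ?thesis using s by (simp add: power_mult power_add)
    qed
    then have "(\<Sum>i<n. r ^ (m (M+i) - tail_deg M i)) \<le> (\<Sum>i<n. s ^ M * s ^ i)"
      by (intro sum_mono)
    also have "\<dots> = s ^ M * ((1 - s ^ n) / (1 - s))"
      using s by (simp add: sum_distrib_left[symmetric] sum_gp_strict)
    also have "\<dots> \<le> s ^ M * (1 / (1 - s))"
      using s by (intro mult_left_mono divide_right_mono) auto
    also have "\<dots> \<le> 1/2" using M s by (simp add: field_simps)
    finally show ?thesis .
  qed
  then show ?thesis by (rule that)
qed

lemma norm_tail_X_ge_half:
  assumes "(\<Sum>i<n. r ^ (m (M+i) - tail_deg M i)) \<le> 1/2" "cmod w \<le> r" "r \<le> 1"
  shows "(\<Prod>i<n. A (M+i)) / 2 \<le> cmod (tail_X M n w)"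
proof -
  have "cmod w ^ k \<le> r ^ k" for k by (rule power_mono) (use assms(2) in auto)
  then have "(\<Sum>i<n. cmod w ^ (m (M+i) - tail_deg M i)) \<le> (\<Sum>i<n. r ^ (m (M+i) - tail_deg M i))"
    by (intro sum_mono)
  with assms(1) have "(\<Sum>i<n. cmod w ^ (m (M+i) - tail_deg M i)) \<le> 1/2" by linarith
  moreover have "0 < (\<Prod>i<n. A (M+i))" using A_pos by (intro prod_pos) auto
  ultimately have "(\<Prod>i<n. A (M+i)) / 2 \<le> (\<Prod>i<n. A (M+i)) * (1 - (\<Sum>i<n. cmod w ^ (m (M+i) - tail_deg M i)))"
    by (simp add: field_simps)
  also have "\<dots> \<le> cmod (tail_X M n w)"
    using assms(2,3) by (intro norm_tail_X_ge) simp
  finally show ?thesis .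
qed

lemma one_le_A_B: "1 \<le> (A j)\<^sup>2 + (cmod (B j))\<^sup>2"
  using A_B[of j] zero_le_power2[of "cmod (B j)"] by linarith

lemma ln_A_B_nonneg: "0 \<le> ln ((A j)\<^sup>2 + (cmod (B j))\<^sup>2)"
  using one_le_A_B by (rule ln_ge_zero)

lemma ln_A_B_le: "ln ((A j)\<^sup>2 + (cmod (B j))\<^sup>2) \<le> 4 * ln (A j)"
proof -
  have "(A j)\<^sup>2 + (cmod (B j))\<^sup>2 = 2 * (A j)\<^sup>2 - 1" using A_B[of j] by simp
  also have "\<dots> \<le> (A j)\<^sup>2 * (A j)\<^sup>2"
    using zero_le_power2[of "(A j)\<^sup>2 - 1"] by (simp add: power2_eq_square algebra_simps)
  finally have "ln ((A j)\<^sup>2 + (cmod (B j))\<^sup>2) \<le> ln ((A j)\<^sup>2 * (A j)\<^sup>2)"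
    using one_le_A_B[of j] by (intro ln_mono) auto
  also have "\<dots> = 4 * ln (A j)" using A_pos[of j] by (simp add: ln_mult ln_realpow)
  finally show ?thesis .
qed

lemma integral_poisson_kernel_tail_X_sq_le:
  assumes w: "cmod w < 1" and p: "\<And>t. poisson_kernel w t \<le> p"
  shows "integral {0..1} (\<lambda>t. poisson_kernel w t * (cmod (tail_X M n (circ t)))\<^sup>2)
           \<le> p * (\<Prod>i<n. (A (M+i))\<^sup>2 + (cmod (B (M+i)))\<^sup>2)"
proof -
  have X_cont: "continuous_on {0..1} (\<lambda>t. tail_X M n (circ t))"
    by (intro continuous_on_compose2[OF continuous_on_tail(1) continuous_on_circ]) auto
  have "integral {0..1} (\<lambda>t. poisson_kernel w t * (cmod (tail_X M n (circ t)))\<^sup>2)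
      \<le> integral {0..1} (\<lambda>t. p * (cmod (tail_X M n (circ t)))\<^sup>2)"
    using p by (intro integral_le integrable_continuous_interval continuous_intros
        continuous_on_poisson_kernel w X_cont mult_right_mono) auto
  also have "\<dots> = p * tail_energy M n"
    using has_integral_tail_energy[of M n] by (simp add: integral_unique)
  also have "\<dots> \<le> p * (\<Prod>i<n. (A (M+i))\<^sup>2 + (cmod (B (M+i)))\<^sup>2)"
    using tail_energy_le[of M n] order_trans[OF poisson_kernel_nonneg[OF w] p] by (simp add: mult_left_mono)
  finally show ?thesis .
qed

lemma ln_norm_tail_X_le:
  assumes w: "cmod w < 1" and G: "G \<in> sets lebesgue"
    and K: "1 \<le> K" "\<And>t. t \<in> G \<Longrightarrow> cmod (tail_X M n (circ t)) \<le> K"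
    and p: "\<And>t. poisson_kernel w t \<le> p"
    and \<omega>: "integral {0..1} (\<lambda>t. poisson_kernel w t * indicator ({0..1} \<inter> - G) t) \<le> \<omega>"
  shows "ln (cmod (tail_X M n w)) \<le> ln K + p / 2 + \<omega> / 2 * (\<Sum>i<n. ln ((A (M+i))\<^sup>2 + (cmod (B (M+i)))\<^sup>2))"
proof -
  define X where "X t = tail_X M n (circ t)" for t
  define P where "P = (\<Prod>i<n. (A (M+i))\<^sup>2 + (cmod (B (M+i)))\<^sup>2)"
  define Lsum where "Lsum = (\<Sum>i<n. ln ((A (M+i))\<^sup>2 + (cmod (B (M+i)))\<^sup>2))"
  define ind :: "real \<Rightarrow> real" where "ind = indicator ({0..1} \<inter> - G)"
  have P_ge: "1 \<le> P" unfolding P_def by (intro prod_ge_1 one_le_A_B)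
  then have P_pos: "0 < P" by linarith
  have ln_P: "ln P = Lsum"
    unfolding P_def Lsum_def using A_pos by (intro ln_prod) (simp_all add: less_imp_neq[symmetric])
  have Lsum_nonneg: "0 \<le> Lsum" unfolding Lsum_def by (intro sum_nonneg ln_A_B_nonneg)
  have X_nz: "X t \<noteq> 0" for t using tail_X_nonzero_dominates_V[of "circ t" M n] by (simp add: X_def)
  have X_cont: "continuous_on {0..1} X"
    unfolding X_def by (intro continuous_on_compose2[OF continuous_on_tail(1) continuous_on_circ]) auto
  have pk_nonneg: "0 \<le> poisson_kernel w t" for t by (rule poisson_kernel_nonneg[OF w])
  have pk_int: "(poisson_kernel w has_integral 1) {0..1}" by (rule has_integral_poisson_kernel[OF w])
  have ind_int: "(\<lambda>t. poisson_kernel w t * ind t) integrable_on {0..1}"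
    unfolding ind_def using G
    by (intro poisson_kernel_indicator_integrable w) (auto simp: Diff_eq[symmetric] intro: sets.Diff)
  have X2_int: "(\<lambda>t. poisson_kernel w t * (cmod (X t))\<^sup>2) integrable_on {0..1}"
    by (intro integrable_continuous_interval continuous_intros continuous_on_poisson_kernel w X_cont)
  have energy: "integral {0..1} (\<lambda>t. poisson_kernel w t * (cmod (X t))\<^sup>2) \<le> p * P"
    unfolding X_def P_def by (rule integral_poisson_kernel_tail_X_sq_le[OF w p])
  have pointwise: "ln (cmod (X t)) \<le> ln K + (cmod (X t))\<^sup>2 / (2 * P) + Lsum / 2 * ind t"
    if "t \<in> {0..1}" for t
    unfolding ln_P[symmetric] using K X_nz P_ge that
    by (intro ln_le_bound_or_square_div) (auto simp: X_def ind_def indicator_def)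
  have "((\<lambda>t. poisson_kernel w t * ln (cmod (X t))) has_integral ln (cmod (tail_X M n w))) {0..1}"
    unfolding X_def by (rule Poisson_integral_ln_norm_tail_X[OF w])
  moreover have "((\<lambda>t. ln K * poisson_kernel w t + 1 / (2 * P) * (poisson_kernel w t * (cmod (X t))\<^sup>2)
      + Lsum / 2 * (poisson_kernel w t * ind t)) has_integral
      ln K * 1 + 1 / (2 * P) * integral {0..1} (\<lambda>t. poisson_kernel w t * (cmod (X t))\<^sup>2)
      + Lsum / 2 * integral {0..1} (\<lambda>t. poisson_kernel w t * ind t)) {0..1}"
    by (intro has_integral_add has_integral_mult_right pk_int integrable_integral X2_int ind_int)
  ultimately have "ln (cmod (tail_X M n w))
      \<le> ln K * 1 + 1 / (2 * P) * integral {0..1} (\<lambda>t. poisson_kernel w t * (cmod (X t))\<^sup>2)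
        + Lsum / 2 * integral {0..1} (\<lambda>t. poisson_kernel w t * ind t)"
  proof (rule has_integral_le)
    show "poisson_kernel w t * ln (cmod (X t)) \<le> ln K * poisson_kernel w t
        + 1 / (2 * P) * (poisson_kernel w t * (cmod (X t))\<^sup>2) + Lsum / 2 * (poisson_kernel w t * ind t)"
      if "t \<in> {0..1}" for t
      using mult_left_mono[OF pointwise[OF that] pk_nonneg[of t]] by (simp add: algebra_simps)
  qed
  also have "\<dots> \<le> ln K + 1 / (2 * P) * (p * P) + Lsum / 2 * \<omega>"
    using energy \<omega> P_pos Lsum_nonneg by (intro add_mono mult_left_mono) (auto simp: ind_def)
  finally show ?thesis using P_pos by (simp add: Lsum_def mult.commute)
qed

lemma bounded_tail_ln_A_sums:
  assumes G: "G \<in> sets lebesgue" "G \<subseteq> {0..1}"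
    and K: "1 \<le> K" "\<And>t M n. t \<in> G \<Longrightarrow> cmod (tail_X M n (circ t)) \<le> K"
    and h: "0 < h" "0 \<le> c - h" "c + h \<le> 1" and dense: "measure lebesgue ({c-h..c+h} - G) \<le> h / 32"
  obtains M C where "\<And>n. (\<Sum>i<n. ln (A (M+i))) \<le> C"
proof -
  define r where "r = 1 - h/2"
  define w where "w = of_real (1 - h/2) * circ c"
  have r: "0 \<le> r" "r < 1" "r \<le> 1" using h by (auto simp: r_def)
  have "cmod w = r" unfolding w_def r_def using h by (intro norm_near_circle) simp
  then have norm_w: "cmod w \<le> r" "cmod w < 1" using r by simp_all
  obtain M where M: "\<And>n. (\<Sum>i<n. r ^ (m (M+i) - tail_deg M i)) \<le> 1/2"
    using tail_powers_sum_le_half[OF r(1,2)] by blast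
  have "(\<Sum>i<n. ln (A (M+i))) \<le> 2 * (ln K + 2 / h + ln 2)" for n
  proof -
    define L where "L = (\<Sum>i<n. ln (A (M+i)))"
    have prod_pos: "0 < (\<Prod>i<n. A (M+i))" using A_pos by (intro prod_pos) auto
    have "ln (\<Prod>i<n. A (M+i)) = L"
      unfolding L_def using A_pos by (intro ln_prod) (simp_all add: less_imp_neq[symmetric])
    then have "L - ln 2 = ln ((\<Prod>i<n. A (M+i)) / 2)" using ln_divide_pos[OF prod_pos, of 2] by simp
    also have "\<dots> \<le> ln (cmod (tail_X M n w))"
      using norm_tail_X_ge_half[OF M norm_w(1) r(3)] prod_pos by (intro ln_mono) auto
    also have "\<dots> \<le> ln K + (4 / h) / 2 + (1/4) / 2 * (\<Sum>i<n. ln ((A (M+i))\<^sup>2 + (cmod (B (M+i)))\<^sup>2))"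
    proof (rule ln_norm_tail_X_le[OF norm_w(2) G(1) K])
      show "poisson_kernel w t \<le> 4 / h" for t
        unfolding w_def using h by (intro poisson_kernel_le_near_circle) auto
      have "measure lebesgue ({c-h..c+h} \<inter> - G) \<le> h / 32" using dense by (simp add: Diff_eq)
      then show "integral {0..1} (\<lambda>t. poisson_kernel w t * indicator ({0..1} \<inter> - G) t) \<le> 1/4"
        unfolding w_def using sets.compl_sets[OF G(1)] h
        by (intro integral_poisson_kernel_sparse_le) (auto simp: Compl_eq_Diff_UNIV)
    qed
    also have "\<dots> \<le> ln K + 2 / h + L / 2"
      using sum_mono[of "{..<n}" "\<lambda>i. ln ((A (M+i))\<^sup>2 + (cmod (B (M+i)))\<^sup>2)" "\<lambda>i. 4 * ln (A (M+i))"]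
        ln_A_B_le by (simp add: L_def sum_distrib_left[symmetric])
    finally show ?thesis by (simp add: L_def)
  qed
  then show ?thesis by (rule that)
qed

lemma summable_ln_A_B:
  assumes "\<And>n. (\<Sum>i<n. ln (A (M+i))) \<le> C"
  shows "summable (\<lambda>j. ln ((A j)\<^sup>2 + (cmod (B j))\<^sup>2))"
proof -
  have "summable (\<lambda>i. ln (A (i + M)))"
    by (rule summableI_nonneg_bounded[of _ C]) (use assms one_le_A in \<open>auto simp: add.commute\<close>)
  then have "summable (\<lambda>j. 4 * ln (A j))"
    using summable_iff_shift[of "\<lambda>j. ln (A j)" M] by (intro summable_mult) simp
  then show ?thesis
    by (rule summable_comparison_test'[where N = 0]) (use ln_A_B_nonneg ln_A_B_le in auto)
qed

end

theorem theorem1p3: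
  fixes m :: "nat \<Rightarrow> nat" and q :: real and A :: "nat \<Rightarrow> real" and B :: "nat \<Rightarrow> complex"
    and E :: "real set"
  assumes q: "q \<ge> 3"
    and mpos: "\<And>j. m j > 0"
    and mmono: "strict_mono m"
    and lac: "\<And>j. real (m (Suc j)) \<ge> q * real (m j)"
    and Apos: "\<And>j. A j > 0"
    and AB: "\<And>j. (A j)\<^sup>2 - (cmod (B j))\<^sup>2 = 1"
    and Emeas: "E \<in> sets lebesgue" and Esub: "E \<subseteq> {0..<1}"
    and Epos: "emeasure lebesgue E > 0"
    and conv: "\<And>t. t \<in> E \<Longrightarrow> \<exists>L\<in>SU11. (\<lambda>N. prodL (factor m A B t) N) \<longlonglongrightarrow> L"
  shows "summable (\<lambda>j. ln ((A j)\<^sup>2 + (cmod (B j))\<^sup>2))"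
proof -
  have "3 * m j \<le> m (Suc j)" for j
    using lac[of j] mult_right_mono[OF q, of "real (m j)"] by linarith
  then interpret lacunary_su11 m A B
    using mpos Apos AB by unfold_locales
  have "Bseq (prodL (factor m A B t))" if "t \<in> E" for t
    using conv[OF that] by (auto intro: convergent_imp_Bseq convergentI)
  moreover have "E \<subseteq> {0..1}" using Esub by auto
  ultimately obtain G K where G: "G \<in> sets lebesgue" "G \<subseteq> E" "0 < measure lebesgue G" "1 \<le> K"
      "\<And>t M n. t \<in> G \<Longrightarrow> cmod (tail_X M n (circ t)) \<le> K"
    using bounded_tails_on_positive_measure[OF Emeas _ Epos] by metis
  then have G01: "G \<subseteq> {0..1}" using Esub by auto
  obtain c h where "0 < h" "0 \<le> c - h" "c + h \<le> 1" "measure lebesgue ({c-h..c+h} - G) \<le> h / 32"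
    using exists_interval_dense[OF G(1) G01 G(3), of "1/64"] by auto
  then obtain M C where "\<And>n. (\<Sum>i<n. ln (A (M+i))) \<le> C"
    using bounded_tail_ln_A_sums[OF G(1) G01 G(4,5)] by metis
  then show ?thesis by (rule summable_ln_A_B)
qed

end
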